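(* Let $p$ be a prime and $S$ a finite $p$-group. If $L$ is a subgroup of $S$ with $\mathfrak{X}(S)\leq L\leq S$, then $\mathfrak{X}(S)\leq \mathfrak{X}(L)$.
   Context: For a finite $p$-group $G$ and subgroups $A,B$, write $[A,B;1]=[A,B]$ and $[A,B;k]=[[A,B;k-1],B]$. $\Omega_1(G)$ denotes the subgroup generated by the elements of order $p$ in $G$. The Oliver subgroup $\mathfrak{X}(G)$ of a finite $p$-group $G$ is the unique largest normal subgroup $K$ of $G$ admitting a chain $1=Q_0\leq Q_1\leq\cdots\leq Q_n=K$ of normal subgroups $Q_i\unlhd G$ such that $[\Omega_1(C_G(Q_{i-1})),Q_i;p-1]=1$ for each $1\leq i\leq n$. For a subgroup $L\leq S$, $\mathfrak{X}(L)$ is the Oliver subgroup of $L$ regarded as a $p$-group in its own right (normality and centralizers taken in $L$). *)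

theory Defs
  imports "HOL-Algebra.Algebra" "HOL-Algebra.Multiplicative_Group"
begin

definition p_group :: "('a, 'b) monoid_scheme \<Rightarrow> nat \<Rightarrow> bool" where
  "p_group G p \<longleftrightarrow> group G \<and> Factorial_Ring.prime p \<and> finite (carrier G) \<and> (\<exists>n. order G = p ^ n)"

definition comm_elem :: "('a, 'b) monoid_scheme \<Rightarrow> 'a \<Rightarrow> 'a \<Rightarrow> 'a" where
  "comm_elem G x y = inv\<^bsub>G\<^esub> x \<otimes>\<^bsub>G\<^esub> inv\<^bsub>G\<^esub> y \<otimes>\<^bsub>G\<^esub> x \<otimes>\<^bsub>G\<^esub> y"

definition comm_subgroup :: "('a, 'b) monoid_scheme \<Rightarrow> 'a set \<Rightarrow> 'a set \<Rightarrow> 'a set" where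
  "comm_subgroup G A B = generate G {comm_elem G a b | a b. a \<in> A \<and> b \<in> B}"

text \<open>Iterated commutator: comm_iter G A B k = [A,B;k], with [A,B;0] = A,
  so [A,B;1] = [A,B] and [A,B;k] = [[A,B;k-1],B].\<close>
fun comm_iter :: "('a, 'b) monoid_scheme \<Rightarrow> 'a set \<Rightarrow> 'a set \<Rightarrow> nat \<Rightarrow> 'a set" where
  "comm_iter G A B 0 = A"
| "comm_iter G A B (Suc k) = comm_subgroup G (comm_iter G A B k) B"

definition centralizer :: "('a, 'b) monoid_scheme \<Rightarrow> 'a set \<Rightarrow> 'a set" where
  "centralizer G Q = {g \<in> carrier G. \<forall>q\<in>Q. g \<otimes>\<^bsub>G\<^esub> q = q \<otimes>\<^bsub>G\<^esub> g}"

definition Omega1 :: "('a, 'b) monoid_scheme \<Rightarrow> nat \<Rightarrow> 'a set \<Rightarrow> 'a set" where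
  "Omega1 G p H = generate G {x \<in> H. group.ord G x = p}"

definition oliver_chain :: "('a, 'b) monoid_scheme \<Rightarrow> nat \<Rightarrow> 'a set \<Rightarrow> bool" where
  "oliver_chain G p K \<longleftrightarrow>
     (\<exists>(n::nat) (Q :: nat \<Rightarrow> 'a set).
        Q 0 = {\<one>\<^bsub>G\<^esub>} \<and> Q n = K \<and>
        (\<forall>i\<le>n. Q i \<lhd> G) \<and>
        (\<forall>i<n. Q i \<subseteq> Q (Suc i)) \<and>
        (\<forall>i. 1 \<le> i \<and> i \<le> n \<longrightarrow>
              comm_iter G (Omega1 G p (centralizer G (Q (i - 1)))) (Q i) (p - 1) = {\<one>\<^bsub>G\<^esub>}))"

definition oliver :: "('a, 'b) monoid_scheme \<Rightarrow> nat \<Rightarrow> 'a set" where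
  "oliver G p = (THE K. K \<lhd> G \<and> oliver_chain G p K \<and>
                       (\<forall>K'. K' \<lhd> G \<and> oliver_chain G p K' \<longrightarrow> K' \<subseteq> K))"

end

theory Submission
  imports Defs
begin

text \<open>Normal subgroups admitting an Oliver chain are closed under products: a chain
  for \<open>K\<close> followed by \<open>K\<close> times a chain for \<open>R\<close> is a chain for \<open>KR\<close>,
  because elements centralizing \<open>KP\<close> commute with \<open>K\<close>, so that
  \<open>[x, kr] = [x, r]\<close>. In a finite group a maximal such subgroup is therefore the
  largest one, which is \<open>\<XX>(G)\<close>.
  If \<open>\<XX>(S) \<le> L\<close>, every term of an Oliver chain of \<open>\<XX>(S)\<close> lies in \<open>L\<close>
  and is normal in \<open>L\<close>; since \<open>\<Omega>\<^sub>1(C\<^sub>L(Q)) \<le> \<Omega>\<^sub>1(C\<^sub>S(Q))\<close> and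
  commutators in \<open>L\<close> are those of \<open>S\<close>, the chain is also an Oliver chain of
  \<open>L\<close>, whence \<open>\<XX>(S) \<le> \<XX>(L)\<close>.\<close>

context group begin

lemma centralizer_subset: "centralizer G Q \<subseteq> carrier G"
  unfolding centralizer_def by auto

lemma centralizer_antimono: "A \<subseteq> B \<Longrightarrow> centralizer G B \<subseteq> centralizer G A"
  unfolding centralizer_def by auto

lemma commute_inv:
  assumes "a \<in> carrier G" "q \<in> carrier G" "a \<otimes> q = q \<otimes> a"
  shows "inv a \<otimes> q = q \<otimes> inv a"
  using assms by (simp add: inv_solve_left inv_solve_right m_assoc)

lemma commute_mult:
  assumes "a \<in> carrier G" "b \<in> carrier G" "q \<in> carrier G"
    and "a \<otimes> q = q \<otimes> a" "b \<otimes> q = q \<otimes> b"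
  shows "a \<otimes> b \<otimes> q = q \<otimes> (a \<otimes> b)"
  using assms by (metis m_assoc)

lemma centralizer_subgroup:
  assumes "Q \<subseteq> carrier G"
  shows "subgroup (centralizer G Q) G"
proof (rule subgroupI)
  show "centralizer G Q \<noteq> {}"
    using assms unfolding centralizer_def by force
qed (use assms in \<open>auto simp: centralizer_def commute_inv commute_mult subset_iff\<close>)

lemma centralizer_normal:
  assumes N: "N \<lhd> G"
  shows "centralizer G N \<lhd> G"
  unfolding normal_inv_iff
proof (intro conjI ballI)
  have NG: "N \<subseteq> carrier G"
    using N normal_imp_subgroup subgroup.subset by blast
  show "subgroup (centralizer G N) G"
    using centralizer_subgroup[OF NG] .
  fix x c assume x: "x \<in> carrier G" and c: "c \<in> centralizer G N"
  have cG: "c \<in> carrier G"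
    using c centralizer_subset by blast
  have "x \<otimes> c \<otimes> inv x \<otimes> n = n \<otimes> (x \<otimes> c \<otimes> inv x)" if n: "n \<in> N" for n
  proof -
    have nG: "n \<in> carrier G" using n NG by blast
    have "inv x \<otimes> n \<otimes> x \<in> N"
      using normal.inv_op_closed1[OF N x n] .
    then have comm: "c \<otimes> (inv x \<otimes> n \<otimes> x) = (inv x \<otimes> n \<otimes> x) \<otimes> c"
      using c unfolding centralizer_def by blast
    have "x \<otimes> c \<otimes> inv x \<otimes> n = x \<otimes> (c \<otimes> (inv x \<otimes> n \<otimes> x)) \<otimes> inv x"
      using x cG nG by (simp add: m_assoc)
    also have "\<dots> = n \<otimes> (x \<otimes> c \<otimes> inv x)"
      unfolding comm using x cG nG by (simp add: m_assoc[symmetric])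
    finally show ?thesis .
  qed
  then show "x \<otimes> c \<otimes> inv x \<in> centralizer G N"
    unfolding centralizer_def using x cG by auto
qed

lemma comm_elem_in_normal:
  assumes N: "N \<lhd> G" and a: "a \<in> N" and b: "b \<in> carrier G"
  shows "comm_elem G a b \<in> N"
proof -
  interpret N: normal N G by (rule N)
  have "inv a \<otimes> (inv b \<otimes> a \<otimes> b) \<in> N"
    using a b N.inv_op_closed1 by blast
  then show ?thesis
    unfolding comm_elem_def using a b by (simp add: m_assoc)
qed

lemma comm_iter_subset_normal:
  assumes "N \<lhd> G" "A \<subseteq> N" "B \<subseteq> carrier G"
  shows "comm_iter G A B k \<subseteq> N"
proof (induction k)
  case (Suc k)
  then have "{comm_elem G a b | a b. a \<in> comm_iter G A B k \<and> b \<in> B} \<subseteq> N"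
    using assms comm_elem_in_normal by blast
  then show ?case
    unfolding comm_iter.simps comm_subgroup_def
    using generate_subgroup_incl normal_imp_subgroup[OF assms(1)] by blast
qed (use assms in simp)

lemma comm_iter_mono_left: "A \<subseteq> A' \<Longrightarrow> comm_iter G A B k \<subseteq> comm_iter G A' B k"
proof (induction k)
  case (Suc k)
  then have "{comm_elem G a b | a b. a \<in> comm_iter G A B k \<and> b \<in> B}
        \<subseteq> {comm_elem G a b | a b. a \<in> comm_iter G A' B k \<and> b \<in> B}"
    by blast
  then show ?case
    unfolding comm_iter.simps comm_subgroup_def by (rule mono_generate)
qed simp

lemma one_in_comm_iter: "0 < k \<Longrightarrow> \<one> \<in> comm_iter G A B k"
  by (cases k) (auto simp: comm_subgroup_def intro: generate.one)

lemma comm_elem_mult_right: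
  assumes "a \<in> carrier G" "x \<in> carrier G" "r \<in> carrier G" "a \<otimes> x = x \<otimes> a"
  shows "comm_elem G a (x \<otimes> r) = comm_elem G a r"
proof -
  have "a \<otimes> (x \<otimes> r) = x \<otimes> (a \<otimes> r)"
    using assms by (metis m_assoc)
  then show ?thesis
    unfolding comm_elem_def using assms
    by (simp add: inv_mult_group m_assoc) (simp add: m_assoc[symmetric])
qed

lemma comm_iter_set_mult_right:
  assumes N: "N \<lhd> G" and A: "A \<subseteq> centralizer G N" and B: "B \<subseteq> carrier G"
  shows "comm_iter G A (N <#> B) k \<subseteq> comm_iter G A B k"
proof (induction k)
  case (Suc k)
  have NG: "N \<subseteq> carrier G"
    using N normal_imp_subgroup subgroup.subset by blast
  have "{comm_elem G a b | a b. a \<in> comm_iter G A (N <#> B) k \<and> b \<in> N <#> B}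
     \<subseteq> {comm_elem G a b | a b. a \<in> comm_iter G A B k \<and> b \<in> B}"
  proof clarify
    fix a b assume a: "a \<in> comm_iter G A (N <#> B) k" and b: "b \<in> N <#> B"
    then obtain x r where x: "x \<in> N" and r: "r \<in> B" and bxr: "b = x \<otimes> r"
      unfolding set_mult_def by auto
    have a': "a \<in> comm_iter G A B k"
      using a Suc by blast
    have "a \<in> centralizer G N"
      using a' comm_iter_subset_normal[OF centralizer_normal[OF N] A B] by blast
    then have "a \<in> carrier G" "a \<otimes> x = x \<otimes> a"
      using x unfolding centralizer_def by auto
    then have "comm_elem G a b = comm_elem G a r"
      unfolding bxr using comm_elem_mult_right x r NG B by blast
    then show "\<exists>a' b'. comm_elem G a b = comm_elem G a' b' \<and> a' \<in> comm_iter G A B k \<and> b' \<in> B"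
      using a' r by blast
  qed
  then show ?case
    unfolding comm_iter.simps comm_subgroup_def by (rule mono_generate)
qed simp

end

definition oliver_step :: "('a, 'b) monoid_scheme \<Rightarrow> nat \<Rightarrow> 'a set \<Rightarrow> 'a set \<Rightarrow> bool" where
  "oliver_step G p A B \<longleftrightarrow> comm_iter G (Omega1 G p (centralizer G A)) B (p - 1) = {\<one>\<^bsub>G\<^esub>}"

lemma oliver_chain_iff:
  "oliver_chain G p K \<longleftrightarrow>
     (\<exists>n Q. Q 0 = {\<one>\<^bsub>G\<^esub>} \<and> Q n = K \<and> (\<forall>i\<le>n. Q i \<lhd> G) \<and>
        (\<forall>i<n. Q i \<subseteq> Q (Suc i) \<and> oliver_step G p (Q i) (Q (Suc i))))"
proof -
  have shift: "(\<forall>i. 1 \<le> i \<and> i \<le> n \<longrightarrow> P i) \<longleftrightarrow> (\<forall>i<n. P (Suc i))" for n and P :: "nat \<Rightarrow> bool"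
  proof (intro iffI allI impI)
    fix i assume "\<forall>i<n. P (Suc i)" and "1 \<le> i \<and> i \<le> n"
    then show "P i"
      by (cases i) auto
  qed simp
  show ?thesis
    unfolding oliver_chain_def oliver_step_def[symmetric] shift
    by (simp only: diff_Suc_1 imp_conjR all_conj_distrib conj_assoc)
qed

context group begin

lemma subset_set_mult_left: "A \<subseteq> carrier G \<Longrightarrow> subgroup B G \<Longrightarrow> A \<subseteq> A <#> B"
  unfolding set_mult_def using subgroup.one_closed by fastforce

lemma subset_set_mult_right: "subgroup A G \<Longrightarrow> B \<subseteq> carrier G \<Longrightarrow> B \<subseteq> A <#> B"
  unfolding set_mult_def using subgroup.one_closed by fastforce

lemma oliver_step_set_mult:
  assumes N: "N \<lhd> G" and A: "subgroup A G" and B: "B \<subseteq> carrier G" and p: "2 \<le> p"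
    and step: "oliver_step G p A B"
  shows "oliver_step G p (N <#> A) (N <#> B)"
proof -
  have NG: "subgroup N G" "N \<subseteq> carrier G"
    using N normal_imp_subgroup subgroup.subset by blast+
  have AG: "A \<subseteq> carrier G"
    using A subgroup.subset by blast
  let ?X = "Omega1 G p (centralizer G (N <#> A))"
  have "N \<subseteq> N <#> A" "A \<subseteq> N <#> A"
    using subset_set_mult_left[OF NG(2) A] subset_set_mult_right[OF NG(1) AG] .
  then have C: "centralizer G (N <#> A) \<subseteq> centralizer G N"
      "centralizer G (N <#> A) \<subseteq> centralizer G A"
    by (simp_all add: centralizer_antimono)
  have "?X \<subseteq> centralizer G N"
    unfolding Omega1_def using C(1) centralizer_subgroup[OF NG(2)]
    by (intro generate_subgroup_incl) auto
  then have "comm_iter G ?X (N <#> B) (p - 1) \<subseteq> comm_iter G ?X B (p - 1)"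
    by (rule comm_iter_set_mult_right[OF N _ B])
  also have "\<dots> \<subseteq> comm_iter G (Omega1 G p (centralizer G A)) B (p - 1)"
    unfolding Omega1_def by (intro comm_iter_mono_left mono_generate) (use C(2) in auto)
  also have "\<dots> = {\<one>}"
    using step unfolding oliver_step_def by simp
  finally show ?thesis
    unfolding oliver_step_def using one_in_comm_iter p by fastforce
qed

lemma oliver_chain_set_mult:
  assumes p: "2 \<le> p" and K: "K \<lhd> G" "oliver_chain G p K" and R: "R \<lhd> G" "oliver_chain G p R"
  shows "oliver_chain G p (K <#> R)"
proof -
  obtain m Q where Q: "Q 0 = {\<one>}" "Q m = K" "\<forall>i\<le>m. Q i \<lhd> G"
    "\<forall>i<m. Q i \<subseteq> Q (Suc i) \<and> oliver_step G p (Q i) (Q (Suc i))"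
    using K(2) unfolding oliver_chain_iff by auto
  obtain n P where P: "P 0 = {\<one>}" "P n = R" "\<forall>i\<le>n. P i \<lhd> G"
    "\<forall>i<n. P i \<subseteq> P (Suc i) \<and> oliver_step G p (P i) (P (Suc i))"
    using R(2) unfolding oliver_chain_iff by auto
  define Q' where "Q' i = (if i \<le> m then Q i else K <#> P (i - m))" for i
  have K_P0: "K <#> P 0 = K"
    using P(1) K(1) normal_imp_subgroup subgroup.subset coset_mult_one r_coset_eq_set_mult by metis
  have Q'_high: "Q' i = K <#> P (i - m)" if "m \<le> i" for i
    using that K_P0 Q(2) unfolding Q'_def by (cases "i = m") auto
  have step: "Q' i \<subseteq> Q' (Suc i) \<and> oliver_step G p (Q' i) (Q' (Suc i))" if i: "i < m + n" for i
  proof (cases "i < m")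
    case True
    then show ?thesis
      using Q(4) unfolding Q'_def by simp
  next
    case False
    then have j: "i - m < n" "Suc i - m = Suc (i - m)"
      using i by auto
    have "P (i - m) \<subseteq> P (Suc (i - m))" "oliver_step G p (P (i - m)) (P (Suc (i - m)))"
      using j P(4) by auto
    moreover have "P (i - m) \<lhd> G" "P (Suc (i - m)) \<lhd> G"
      using j P(3) by simp_all
    then have "subgroup (P (i - m)) G" "P (Suc (i - m)) \<subseteq> carrier G"
      using normal_imp_subgroup subgroup.subset by blast+
    ultimately show ?thesis
      using False j Q'_high oliver_step_set_mult[OF K(1) _ _ p] mono_set_mult[OF order_refl]
      by (simp add: not_less)
  qed
  have "Q' i \<lhd> G" if "i \<le> m + n" for i
    using that Q(3) P(3) Q'_high normal_subgroup_set_mult_closed[OF K(1)]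
    unfolding Q'_def by (cases "i \<le> m") auto
  moreover have "Q' 0 = {\<one>}" "Q' (m + n) = K <#> R"
    using Q(1) P(2) Q'_high[of "m + n"] unfolding Q'_def by auto
  ultimately show ?thesis
    unfolding oliver_chain_iff using step by blast
qed

lemma ex_greatest_oliver_chain:
  assumes fin: "finite (carrier G)" and p: "2 \<le> p"
  shows "\<exists>K. K \<lhd> G \<and> oliver_chain G p K \<and> (\<forall>K'. K' \<lhd> G \<and> oliver_chain G p K' \<longrightarrow> K' \<subseteq> K)"
proof -
  define F where "F = {K. K \<lhd> G \<and> oliver_chain G p K}"
  have "F \<subseteq> Pow (carrier G)"
    unfolding F_def using normal_imp_subgroup subgroup.subset by blast
  then have "finite F"
    using fin finite_subset by blast
  moreover have "{\<one>} \<in> F"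
    unfolding F_def oliver_chain_iff using one_is_normal by force
  ultimately obtain K where K: "K \<in> F" and Kmax: "\<forall>K'\<in>F. K \<subseteq> K' \<longrightarrow> K = K'"
    using finite_has_maximal by blast
  have "K' \<subseteq> K" if K': "K' \<in> F" for K'
  proof -
    have N: "K \<lhd> G" "K' \<lhd> G" and "oliver_chain G p K" "oliver_chain G p K'"
      using K K' unfolding F_def by auto
    then have "K <#> K' \<in> F"
      unfolding F_def using oliver_chain_set_mult[OF p] normal_subgroup_set_mult_closed by blast
    moreover have "K \<subseteq> K <#> K'" "K' \<subseteq> K <#> K'"
      using N subset_set_mult_left subset_set_mult_right normal_imp_subgroup subgroup.subset
      by metis+
    ultimately show ?thesis
      using Kmax by blast
  qed
  then show ?thesis
    using K unfolding F_def by blast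
qed

lemma oliver_greatest:
  assumes "finite (carrier G)" and "2 \<le> p"
  shows "oliver G p \<lhd> G" "oliver_chain G p (oliver G p)"
    and "K \<lhd> G \<Longrightarrow> oliver_chain G p K \<Longrightarrow> K \<subseteq> oliver G p"
proof -
  obtain M where M: "M \<lhd> G" "oliver_chain G p M"
    "\<forall>K. K \<lhd> G \<and> oliver_chain G p K \<longrightarrow> K \<subseteq> M"
    using ex_greatest_oliver_chain[OF assms] by blast
  have "oliver G p = M"
    unfolding oliver_def by (rule the_equality) (use M in blast)+
  then show "oliver G p \<lhd> G" "oliver_chain G p (oliver G p)"
    and "K \<lhd> G \<Longrightarrow> oliver_chain G p K \<Longrightarrow> K \<subseteq> oliver G p"
    using M by auto
qed

lemma centralizer_consistent:
  assumes "H \<subseteq> carrier G"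
  shows "centralizer (G\<lparr>carrier := H\<rparr>) Q = H \<inter> centralizer G Q"
  using assms unfolding centralizer_def by auto

lemma ord_consistent:
  assumes "subgroup H G"
  shows "group.ord (G\<lparr>carrier := H\<rparr>) x = ord x"
  by (simp add: group.ord_def[OF subgroup_imp_group[OF assms]] ord_def nat_pow_def)

lemma Omega1_consistent:
  assumes H: "subgroup H G" and A: "A \<subseteq> H"
  shows "Omega1 (G\<lparr>carrier := H\<rparr>) p A = Omega1 G p A"
  unfolding Omega1_def ord_consistent[OF H] using A by (intro generate_consistent[OF _ H]) auto

lemma comm_subgroup_consistent:
  assumes H: "subgroup H G" and A: "A \<subseteq> H" and B: "B \<subseteq> H"
  shows "comm_subgroup (G\<lparr>carrier := H\<rparr>) A B = comm_subgroup G A B"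
    and "comm_subgroup G A B \<subseteq> H"
proof -
  let ?T = "{comm_elem G a b | a b. a \<in> A \<and> b \<in> B}"
  have ce: "comm_elem (G\<lparr>carrier := H\<rparr>) a b = comm_elem G a b" if "a \<in> H" "b \<in> H" for a b
    unfolding comm_elem_def using that m_inv_consistent[OF H] by simp
  have T: "{comm_elem (G\<lparr>carrier := H\<rparr>) a b | a b. a \<in> A \<and> b \<in> B} = ?T"
    using A B ce by (metis (lifting) subset_iff)
  have "comm_elem G a b \<in> H" if "a \<in> H" "b \<in> H" for a b
    unfolding comm_elem_def using that by (intro subgroup.m_closed[OF H] subgroup.m_inv_closed[OF H])
  then have "?T \<subseteq> H"
    using A B by blast
  then show "comm_subgroup (G\<lparr>carrier := H\<rparr>) A B = comm_subgroup G A B"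
    and "comm_subgroup G A B \<subseteq> H"
    unfolding comm_subgroup_def T
    by (simp_all add: generate_consistent[OF _ H] generate_subgroup_incl[OF _ H])
qed

lemma comm_iter_consistent:
  assumes H: "subgroup H G" and A: "A \<subseteq> H" and B: "B \<subseteq> H"
  shows "comm_iter (G\<lparr>carrier := H\<rparr>) A B k = comm_iter G A B k \<and> comm_iter G A B k \<subseteq> H"
  by (induction k) (use A B comm_subgroup_consistent[OF H _ B] in auto)

lemma oliver_step_subgroup:
  assumes H: "subgroup H G" and B: "B \<subseteq> H" and p: "2 \<le> p" and step: "oliver_step G p A B"
  shows "oliver_step (G\<lparr>carrier := H\<rparr>) p A B"
proof -
  let ?X = "Omega1 G p (H \<inter> centralizer G A)"
  have HG: "H \<subseteq> carrier G"
    using H subgroup.subset by blast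
  have "?X \<subseteq> H"
    unfolding Omega1_def by (rule generate_subgroup_incl[OF _ H]) auto
  then have restrict: "comm_iter (G\<lparr>carrier := H\<rparr>) ?X B (p - 1) = comm_iter G ?X B (p - 1)"
    using comm_iter_consistent[OF H _ B] by blast
  have "comm_iter G ?X B (p - 1) \<subseteq> comm_iter G (Omega1 G p (centralizer G A)) B (p - 1)"
    unfolding Omega1_def by (intro comm_iter_mono_left mono_generate) auto
  also have "\<dots> = {\<one>}"
    using step unfolding oliver_step_def .
  finally have "comm_iter G ?X B (p - 1) = {\<one>}"
    using one_in_comm_iter[of "p - 1"] p by auto
  then show ?thesis
    unfolding oliver_step_def centralizer_consistent[OF HG] Omega1_consistent[OF H Int_lower1] restrict
    by simp
qed

lemma oliver_chain_subgroup:
  assumes H: "subgroup H G" and KH: "K \<subseteq> H" and p: "2 \<le> p" and chain: "oliver_chain G p K"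
  shows "oliver_chain (G\<lparr>carrier := H\<rparr>) p K"
proof -
  obtain n Q where Q: "Q 0 = {\<one>}" "Q n = K" "\<forall>i\<le>n. Q i \<lhd> G"
    "\<forall>i<n. Q i \<subseteq> Q (Suc i) \<and> oliver_step G p (Q i) (Q (Suc i))"
    using chain unfolding oliver_chain_iff by auto
  have QH: "Q i \<subseteq> H" if "i \<le> n" for i
  proof -
    have "Q i \<subseteq> Q n"
      using that by (induction rule: dec_induct) (use Q(4) in auto)
    then show ?thesis
      using Q(2) KH by blast
  qed
  show ?thesis
    unfolding oliver_chain_iff
  proof (intro exI[of _ n] exI[of _ Q] conjI allI impI)
    show "Q 0 = {\<one>\<^bsub>G\<lparr>carrier := H\<rparr>\<^esub>}" "Q n = K"
      using Q(1,2) by simp_all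
  next
    fix i assume "i \<le> n"
    then show "Q i \<lhd> G\<lparr>carrier := H\<rparr>"
      using Q(3) QH normal_restrict_supergroup[OF H] by blast
  next
    fix i assume "i < n"
    then show "Q i \<subseteq> Q (Suc i)" "oliver_step (G\<lparr>carrier := H\<rparr>) p (Q i) (Q (Suc i))"
      using Q(4) QH[of "Suc i"] oliver_step_subgroup[OF H _ p] by simp_all
  qed
qed

end

theorem lemma3p1:
  fixes S :: "('a, 'b) monoid_scheme" and p :: nat and L :: "'a set"
  assumes "Factorial_Ring.prime p"
    and "p_group S p"
    and "subgroup L S"
    and "oliver S p \<subseteq> L"
  shows "oliver S p \<subseteq> oliver (S\<lparr>carrier := L\<rparr>) p"
proof -
  interpret group S
    using assms(2) unfolding p_group_def by blast
  interpret L: group "S\<lparr>carrier := L\<rparr>"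
    using subgroup_imp_group[OF assms(3)] .
  have p: "2 \<le> p"
    using assms(1) prime_ge_2_nat by blast
  have fin: "finite (carrier S)" "finite (carrier (S\<lparr>carrier := L\<rparr>))"
    using assms(2,3) finite_subset subgroup.subset unfolding p_group_def by auto
  have "oliver S p \<lhd> S\<lparr>carrier := L\<rparr>"
    using normal_restrict_supergroup[OF assms(3) oliver_greatest(1)[OF fin(1) p] assms(4)] .
  moreover have "oliver_chain (S\<lparr>carrier := L\<rparr>) p (oliver S p)"
    using oliver_chain_subgroup[OF assms(3,4) p oliver_greatest(2)[OF fin(1) p]] .
  ultimately show ?thesis
    by (rule L.oliver_greatest(3)[OF fin(2) p])
qed

end
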